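(* There exists a constant $C_\xi>0$ depending only on $\xi$ such that for every $\beta>0$, $$\beta x_\beta(q)\le\frac{C_\xi}{\xi(1)-\xi(q)}\quad\text{for all }q\in[0,1).$$
   Context: For $N\ge1$ let $S_N=\{\sigma\in\mathbb R^N:\sum_i\sigma_i^2=N\}$, $m_N$ the uniform probability measure on $S_N$. Let $(\gamma_p)_{p\ge2}$ be real with $\sum_{p\ge2}2^p\gamma_p^2<\infty$, $h\in\mathbb R$, $\xi(s)=\sum_{p\ge2}\gamma_p^2s^p$; $X_N(\sigma)=\sum_{p\ge2}\gamma_pN^{-(p-1)/2}\sum_{i_1,\dots,i_p=1}^N g_{i_1,\dots,i_p}\sigma_{i_1}\cdots\sigma_{i_p}$ with i.i.d. standard Gaussians $g$, and $H_N(\sigma)=X_N(\sigma)+h\sum_i\sigma_i$. For $\beta>0$ let $\xi_\beta=\beta^2\xi$, $h_\beta=\beta h$, $\mathcal M$ the set of distribution functions $x$ on $[0,1]$ with $x(\hat q)=1$ for some $\hat q<1$, $\hat x(q)=\int_q^1x$, and $\mathcal Q_\beta(x)=\frac12\big(\int_0^1(\xi'_\beta(q)+h_\beta^2)x(q)dq+\int_0^{\hat q}\frac{dq}{\hat x(q)}+\log(1-\hat q)\big)$ (any $\hat q<1$ with $x(\hat q)=1$). It is known that $\lim_N\mathbb E\frac1N\log\int_{S_N}e^{\beta H_N}dm_N=\inf_{\mathcal M}\mathcal Q_\beta$ and that this infimum is attained at a unique $x_\beta\in\mathcal M$. *)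

theory Defs
  imports "HOL-Analysis.Analysis"
begin

definition xi :: "(nat \<Rightarrow> real) \<Rightarrow> real \<Rightarrow> real" where
  "xi gam s = (\<Sum>p. (gam (p + 2))\<^sup>2 * s ^ (p + 2))"

text \<open>Distribution functions on [0,1] (CDFs of probability measures on [0,1],
  considered on [0,1]) that reach 1 at some point qhat < 1.\<close>
definition distr_fun_01 :: "(real \<Rightarrow> real) \<Rightarrow> bool" where
  "distr_fun_01 x \<longleftrightarrow> mono_on {0..1} x \<and> (\<forall>q\<in>{0..1}. 0 \<le> x q \<and> x q \<le> 1)
     \<and> x 1 = 1 \<and> (\<forall>q\<in>{0..<1}. (x \<longlongrightarrow> x q) (at_right q))"

definition parisi_M :: "(real \<Rightarrow> real) set" where
  "parisi_M = {x. distr_fun_01 x \<and> (\<exists>qh. 0 \<le> qh \<and> qh < 1 \<and> x qh = 1)}"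

definition xhat :: "(real \<Rightarrow> real) \<Rightarrow> real \<Rightarrow> real" where
  "xhat x q = integral {q..1} x"

text \<open>The Parisi functional Q_beta (the value does not depend on the choice of qhat).\<close>
definition parisi_Q :: "(nat \<Rightarrow> real) \<Rightarrow> real \<Rightarrow> real \<Rightarrow> (real \<Rightarrow> real) \<Rightarrow> real" where
  "parisi_Q gam h beta x =
     (let qh = (SOME qh. 0 \<le> qh \<and> qh < 1 \<and> x qh = 1) in
      (1/2) * (integral {0..1} (\<lambda>q. (beta\<^sup>2 * deriv (xi gam) q + (beta * h)\<^sup>2) * x q)
               + integral {0..qh} (\<lambda>q. 1 / xhat x q) + ln (1 - qh)))"

text \<open>x is a minimizer of Q_beta over M (by the known result it is the unique one, x_beta).\<close>
definition parisi_minimizer :: "(nat \<Rightarrow> real) \<Rightarrow> real \<Rightarrow> real \<Rightarrow> (real \<Rightarrow> real) \<Rightarrow> bool" where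
  "parisi_minimizer gam h beta x \<longleftrightarrow>
     x \<in> parisi_M \<and> (\<forall>y\<in>parisi_M. parisi_Q gam h beta x \<le> parisi_Q gam h beta y)"

end

theory Submission
  imports Defs
begin

text \<open>Write A = beta^2 xi' + beta^2 h^2. The entropy term int_0^qh 1/xhat + log(1 - qh) of the
  Parisi functional is nonnegative because xhat(q) <= 1 - q; as x_beta is nondecreasing this gives
  2 Q(x_beta) >= int_0^1 A x_beta >= x_beta(q) int_q^1 A. Minimality against the Dirac mass at r
  gives 2 Q(x_beta) <= int_r^1 A + 1/(1 - r). If beta x_beta(q) (1 - q) < 1, the claim follows from
  xi(1) - xi(q) <= xi'(1) (1 - q); otherwise beta >= 1, and r = 1 - 1/beta yields it with
  C = xi'(1) + 1.\<close>

definition xi_coeff :: "(nat \<Rightarrow> real) \<Rightarrow> nat \<Rightarrow> real" where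
  "xi_coeff gam n = (if n < 2 then 0 else (gam n)\<^sup>2)"

definition parisi_weight :: "(nat \<Rightarrow> real) \<Rightarrow> real \<Rightarrow> real \<Rightarrow> real \<Rightarrow> real" where
  "parisi_weight gam h beta q = beta\<^sup>2 * deriv (xi gam) q + (beta * h)\<^sup>2"

definition parisi_entropy :: "(real \<Rightarrow> real) \<Rightarrow> real \<Rightarrow> real" where
  "parisi_entropy x qh = integral {0..qh} (\<lambda>q. 1 / xhat x q) + ln (1 - qh)"

definition dirac_cdf :: "real \<Rightarrow> real \<Rightarrow> real" where
  "dirac_cdf r q = (if q < r then 0 else 1)"

section \<open>The mixture function\<close>

context
  fixes gam :: "nat \<Rightarrow> real"
  assumes summable_gam: "summable (\<lambda>p. 2 ^ (p + 2) * (gam (p + 2))\<^sup>2)"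
begin

lemma summable_xi_coeff_2: "summable (\<lambda>n. xi_coeff gam n * 2 ^ n)"
proof -
  have "(\<lambda>n. xi_coeff gam (n + 2) * 2 ^ (n + 2)) = (\<lambda>p. 2 ^ (p + 2) * (gam (p + 2))\<^sup>2)"
    by (auto simp: xi_coeff_def)
  then show ?thesis
    using summable_gam summable_iff_shift[of "\<lambda>n. xi_coeff gam n * 2 ^ n" 2] by simp
qed

lemma summable_xi_coeff: "\<bar>s\<bar> < 2 \<Longrightarrow> summable (\<lambda>n. xi_coeff gam n * s ^ n)"
  using powser_inside[OF summable_xi_coeff_2, of s] by simp

lemma summable_xi_series: "\<bar>s\<bar> < 2 \<Longrightarrow> summable (\<lambda>p. (gam (p + 2))\<^sup>2 * s ^ (p + 2))"
  using summable_xi_coeff summable_iff_shift[of "\<lambda>n. xi_coeff gam n * s ^ n" 2]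
  by (simp add: xi_coeff_def del: power_Suc)

lemma xi_eq_powser:
  assumes "\<bar>s\<bar> < 2"
  shows "xi gam s = (\<Sum>n. xi_coeff gam n * s ^ n)"
proof -
  let ?f = "\<lambda>n. xi_coeff gam n * s ^ n"
  have "(\<Sum>i<2. ?f i) = 0"
    by (simp add: xi_coeff_def numeral_2_eq_2)
  then have "(\<lambda>i. ?f (i + 2)) sums (\<Sum>n. ?f n)"
    using summable_xi_coeff[OF assms] sums_iff_shift[of ?f 2] by (simp add: summable_sums)
  moreover have "(\<lambda>i. ?f (i + 2)) = (\<lambda>p. (gam (p + 2))\<^sup>2 * s ^ (p + 2))"
    by (auto simp: xi_coeff_def)
  ultimately show ?thesis
    unfolding xi_def by (simp add: sums_iff)
qed

lemma xi_has_field_derivative: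
  assumes "\<bar>s\<bar> < 2"
  shows "(xi gam has_field_derivative (\<Sum>n. diffs (xi_coeff gam) n * s ^ n)) (at s)"
proof -
  have "((\<lambda>t. \<Sum>n. xi_coeff gam n * t ^ n) has_field_derivative
          (\<Sum>n. diffs (xi_coeff gam) n * s ^ n)) (at s)"
    by (rule termdiffs_strong[OF summable_xi_coeff_2]) (use assms in auto)
  then show ?thesis
    by (rule has_field_derivative_transform_within_open[where S = "{-2<..<2}"])
       (use assms xi_eq_powser in auto)
qed

lemma deriv_xi:
  assumes "\<bar>s\<bar> < 2"
  shows "deriv (xi gam) s = (\<Sum>n. diffs (xi_coeff gam) n * s ^ n)"
  using xi_has_field_derivative[OF assms] by (rule DERIV_imp_deriv)

lemma deriv_xi_nonneg_mono:
  assumes "0 \<le> s" "s \<le> t" "t < 2"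
  shows "0 \<le> deriv (xi gam) s" "deriv (xi gam) s \<le> deriv (xi gam) t"
proof -
  have coeff_nonneg: "0 \<le> diffs (xi_coeff gam) n" for n
    by (simp add: diffs_def xi_coeff_def)
  have summable: "summable (\<lambda>n. diffs (xi_coeff gam) n * u ^ n)" if "\<bar>u\<bar> < 2" for u
    by (rule termdiff_converges[where K = 2]) (use that summable_xi_coeff in auto)
  have "0 \<le> (\<Sum>n. diffs (xi_coeff gam) n * s ^ n)"
    using assms by (intro suminf_nonneg summable) (auto intro!: mult_nonneg_nonneg coeff_nonneg)
  moreover have "(\<Sum>n. diffs (xi_coeff gam) n * s ^ n) \<le> (\<Sum>n. diffs (xi_coeff gam) n * t ^ n)"
    using assms by (intro suminf_le summable) (auto intro!: mult_left_mono power_mono coeff_nonneg)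
  ultimately show "0 \<le> deriv (xi gam) s" "deriv (xi gam) s \<le> deriv (xi gam) t"
    using assms deriv_xi[of s] deriv_xi[of t] by auto
qed

lemma xi_has_integral_deriv:
  assumes "0 \<le> a" "a \<le> b" "b \<le> 1"
  shows "(deriv (xi gam) has_integral (xi gam b - xi gam a)) {a..b}"
proof (rule fundamental_theorem_of_calculus[OF assms(2)])
  fix s assume "s \<in> {a..b}"
  then have "\<bar>s\<bar> < 2"
    using assms by auto
  then have "(xi gam has_real_derivative deriv (xi gam) s) (at s)"
    using xi_has_field_derivative DERIV_imp_deriv by metis
  then show "(xi gam has_vector_derivative deriv (xi gam) s) (at s within {a..b})"
    by (metis has_real_derivative_iff_has_vector_derivative has_vector_derivative_at_within)
qed

lemma xi_diff_le:
  assumes "0 \<le> a" "a \<le> 1"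
  shows "xi gam 1 - xi gam a \<le> deriv (xi gam) 1 * (1 - a)"
proof -
  have "xi gam 1 - xi gam a \<le> Henstock_Kurzweil_Integration.content {a..1} *\<^sub>R deriv (xi gam) 1"
    by (rule has_integral_le[OF xi_has_integral_deriv has_integral_const_real])
       (use assms deriv_xi_nonneg_mono(2) in auto)
  then show ?thesis
    using assms by (simp add: mult.commute)
qed

lemma xi_diff_pos:
  assumes "\<exists>p. gam (p + 2) \<noteq> 0" "0 \<le> q" "q < 1"
  shows "0 < xi gam 1 - xi gam q"
proof -
  let ?d = "\<lambda>p. (gam (p + 2))\<^sup>2 * 1 ^ (p + 2) - (gam (p + 2))\<^sup>2 * q ^ (p + 2)"
  obtain p0 where p0: "gam (p0 + 2) \<noteq> 0"
    using assms(1) by blast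
  have "xi gam 1 - xi gam q = (\<Sum>p. ?d p)"
    unfolding xi_def by (rule suminf_diff; rule summable_xi_series) (use assms in auto)
  also have "\<dots> > 0"
  proof (rule suminf_pos2[where i = p0])
    show "summable ?d"
      by (rule summable_diff; rule summable_xi_series) (use assms in auto)
    show "0 \<le> ?d p" for p
      using power_le_one[of q "p + 2"] assms by (simp add: mult_left_le del: power_Suc)
    show "0 < ?d p0"
      using p0 power_strict_mono[of q 1 "p0 + 2"] assms by (simp del: power_Suc)
  qed
  finally show ?thesis .
qed

lemma parisi_weight_nonneg:
  "s \<in> {0..1} \<Longrightarrow> 0 \<le> parisi_weight gam h beta s"
  using deriv_xi_nonneg_mono(1)[of s s] by (simp add: parisi_weight_def)

lemma parisi_weight_mono_on: "mono_on {0..1} (parisi_weight gam h beta)"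
proof (rule mono_onI)
  fix s t :: real
  assume "s \<in> {0..1}" "t \<in> {0..1}" "s \<le> t"
  then have "deriv (xi gam) s \<le> deriv (xi gam) t"
    by (intro deriv_xi_nonneg_mono(2)) auto
  then show "parisi_weight gam h beta s \<le> parisi_weight gam h beta t"
    by (simp add: parisi_weight_def mult_left_mono)
qed

lemma parisi_weight_has_integral:
  assumes "0 \<le> a" "a \<le> 1"
  shows "(parisi_weight gam h beta has_integral
           beta\<^sup>2 * (xi gam 1 - xi gam a) + (beta * h)\<^sup>2 * (1 - a)) {a..1}"
  unfolding parisi_weight_def
  using has_integral_add[OF has_integral_mult_right[OF xi_has_integral_deriv[OF assms order_refl]]
                            has_integral_const_real[of "(beta * h)\<^sup>2" a 1], of "beta\<^sup>2"] assms
  by (simp add: mult.commute[of "1 - a"])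

end

section \<open>Order parameters\<close>

lemma parisi_M_mono_on: "x \<in> parisi_M \<Longrightarrow> mono_on {0..1} x"
  by (simp add: parisi_M_def distr_fun_01_def)

lemma parisi_M_bounds: "x \<in> parisi_M \<Longrightarrow> q \<in> {0..1} \<Longrightarrow> 0 \<le> x q \<and> x q \<le> 1"
  by (simp add: parisi_M_def distr_fun_01_def)

lemma parisi_M_reaches_one: "x \<in> parisi_M \<Longrightarrow> \<exists>qh. 0 \<le> qh \<and> qh < 1 \<and> x qh = 1"
  by (simp add: parisi_M_def)

lemma integrable_on_parisi_M:
  "x \<in> parisi_M \<Longrightarrow> 0 \<le> a \<Longrightarrow> b \<le> 1 \<Longrightarrow> x integrable_on {a..b}"
  by (rule integrable_on_mono_on) (auto intro: mono_on_subset parisi_M_mono_on)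

lemma continuous_on_xhat: "x \<in> parisi_M \<Longrightarrow> continuous_on {0..1} (xhat x)"
  unfolding xhat_def
  using indefinite_integral_continuous_1'[OF integrable_on_parisi_M[of x 0 1]] by simp

lemma xhat_le:
  assumes "x \<in> parisi_M" "0 \<le> q" "q \<le> 1"
  shows "xhat x q \<le> 1 - q"
proof -
  have "integral {q..1} x \<le> integral {q..1} (\<lambda>_. 1::real)"
    by (rule integral_le) (use assms integrable_on_parisi_M parisi_M_bounds in auto)
  then show ?thesis
    using assms by (simp add: xhat_def)
qed

lemma xhat_ge:
  assumes "x \<in> parisi_M" "0 \<le> q" "q \<le> qh" "qh < 1" "x qh = 1"
  shows "1 - qh \<le> xhat x q"
proof -
  have one: "x s = 1" if "s \<in> {qh..1}" for s
    using mono_onD[OF parisi_M_mono_on[OF assms(1)], of qh s] parisi_M_bounds[OF assms(1), of s]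
      that assms by auto
  have "integral {q..qh} x + integral {qh..1} x = integral {q..1} x"
    by (rule Henstock_Kurzweil_Integration.integral_combine) (use assms integrable_on_parisi_M in auto)
  moreover have "0 \<le> integral {q..qh} x"
    by (rule integral_nonneg) (use assms integrable_on_parisi_M parisi_M_bounds in auto)
  moreover have "integral {qh..1} x = integral {qh..1} (\<lambda>_. 1::real)"
    by (rule integral_cong) (use one in auto)
  ultimately show ?thesis
    using assms by (simp add: xhat_def)
qed

lemma has_integral_inverse_one_minus:
  fixes a b :: real
  assumes "a \<le> b" "b < 1"
  shows "((\<lambda>q. 1 / (1 - q)) has_integral (ln (1 - a) - ln (1 - b))) {a..b}"
proof -
  have "((\<lambda>q. 1 / (1 - q)) has_integral (- ln (1 - b) - - ln (1 - a))) {a..b}"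
  proof (rule fundamental_theorem_of_calculus[OF assms(1)])
    fix s assume "s \<in> {a..b}"
    then have "((\<lambda>q. - ln (1 - q)) has_real_derivative 1 / (1 - s)) (at s)"
      using assms by (auto intro!: derivative_eq_intros simp: field_simps)
    then show "((\<lambda>q. - ln (1 - q)) has_vector_derivative 1 / (1 - s)) (at s within {a..b})"
      by (metis has_real_derivative_iff_has_vector_derivative has_vector_derivative_at_within)
  qed
  then show ?thesis
    by simp
qed

lemma parisi_entropy_nonneg:
  assumes "x \<in> parisi_M" "0 \<le> qh" "qh < 1" "x qh = 1"
  shows "0 \<le> parisi_entropy x qh"
proof -
  have pos: "0 < xhat x q" if "q \<in> {0..qh}" for q
    using xhat_ge[OF assms(1) _ _ assms(3,4), of q] that assms by auto
  have "continuous_on {0..qh} (\<lambda>q. 1 / xhat x q)"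
    by (intro continuous_intros continuous_on_subset[OF continuous_on_xhat[OF assms(1)]])
       (use pos assms in \<open>auto simp: less_imp_neq[symmetric]\<close>)
  then have integrable: "(\<lambda>q. 1 / xhat x q) integrable_on {0..qh}"
    by (rule integrable_continuous_interval)
  have "ln (1 - 0) - ln (1 - qh) \<le> integral {0..qh} (\<lambda>q. 1 / xhat x q)"
  proof (rule has_integral_le[OF has_integral_inverse_one_minus integrable_integral[OF integrable]])
    fix q assume "q \<in> {0..qh}"
    then show "1 / (1 - q) \<le> 1 / xhat x q"
      using xhat_le[OF assms(1), of q] pos assms by (intro divide_left_mono) auto
  qed (use assms in auto)
  then show ?thesis
    by (simp add: parisi_entropy_def)
qed

lemma dirac_cdf_in_parisi_M:
  assumes "0 \<le> r" "r < 1"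
  shows "dirac_cdf r \<in> parisi_M"
proof -
  have "\<forall>\<^sub>F s in at_right q. dirac_cdf r s = dirac_cdf r q" for q
    unfolding eventually_at_right_field
  proof (cases "q < r")
    case True
    then show "\<exists>b>q. \<forall>s>q. s < b \<longrightarrow> dirac_cdf r s = dirac_cdf r q"
      by (auto simp: dirac_cdf_def intro!: exI[of _ r])
  next
    case False
    then show "\<exists>b>q. \<forall>s>q. s < b \<longrightarrow> dirac_cdf r s = dirac_cdf r q"
      by (auto simp: dirac_cdf_def intro!: exI[of _ "q + 1"])
  qed
  then have "(dirac_cdf r \<longlongrightarrow> dirac_cdf r q) (at_right q)" for q
    by (rule tendsto_eventually)
  moreover have "mono_on {0..1} (dirac_cdf r)"
    by (auto intro!: mono_onI simp: dirac_cdf_def)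
  ultimately show ?thesis
    unfolding parisi_M_def distr_fun_01_def using assms
    by (auto simp: dirac_cdf_def intro!: exI[of _ r])
qed

lemma xhat_dirac_cdf:
  assumes "0 \<le> r" "r < 1" "q \<in> {0..1}"
  shows "xhat (dirac_cdf r) q = 1 - max q r"
proof (cases "r \<le> q")
  case True
  have "integral {q..1} (dirac_cdf r) = integral {q..1} (\<lambda>_. 1::real)"
    by (rule integral_cong) (use True in \<open>auto simp: dirac_cdf_def\<close>)
  then show ?thesis
    using True assms by (simp add: xhat_def)
next
  case False
  have "integral {q..r} (dirac_cdf r) + integral {r..1} (dirac_cdf r) = integral {q..1} (dirac_cdf r)"
    by (rule Henstock_Kurzweil_Integration.integral_combine)
       (use False assms dirac_cdf_in_parisi_M integrable_on_parisi_M in auto)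
  moreover have "integral {q..r} (dirac_cdf r) = integral {q..r} (\<lambda>_. 0::real)"
    by (rule integral_spike[of "{r}"]) (auto simp: dirac_cdf_def)
  moreover have "integral {r..1} (dirac_cdf r) = integral {r..1} (\<lambda>_. 1::real)"
    by (rule integral_cong) (auto simp: dirac_cdf_def)
  ultimately show ?thesis
    using False assms by (simp add: xhat_def)
qed

lemma parisi_entropy_dirac_cdf_le:
  assumes "0 \<le> r" "r \<le> qh" "qh < 1"
  shows "parisi_entropy (dirac_cdf r) qh \<le> 1 / (1 - r)"
proof -
  let ?f = "\<lambda>q. 1 / (1 - max q r)"
  have "(?f has_integral r * (1 / (1 - r))) {0..r}"
    using has_integral_const_real[of "1 / (1 - r)" 0 r] assms
    by (rule_tac has_integral_eq[rotated]) auto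
  moreover have "(?f has_integral ln (1 - r) - ln (1 - qh)) {r..qh}"
    using has_integral_inverse_one_minus[OF assms(2,3)] by (rule has_integral_eq[rotated]) auto
  ultimately have "(?f has_integral r * (1 / (1 - r)) + (ln (1 - r) - ln (1 - qh))) {0..qh}"
    by (rule has_integral_combine[rotated 2]) (use assms in auto)
  then have "((\<lambda>q. 1 / xhat (dirac_cdf r) q) has_integral
              r * (1 / (1 - r)) + (ln (1 - r) - ln (1 - qh))) {0..qh}"
    by (rule has_integral_eq[rotated]) (use assms xhat_dirac_cdf in auto)
  then have "parisi_entropy (dirac_cdf r) qh = r / (1 - r) + ln (1 - r)"
    by (simp add: parisi_entropy_def integral_unique)
  also have "\<dots> \<le> 1 / (1 - r)"
  proof -
    have "ln (1 - r) \<le> 0"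
      using assms by simp
    moreover have "r / (1 - r) \<le> 1 / (1 - r)"
      using assms divide_right_mono[of r 1 "1 - r"] by simp
    ultimately show ?thesis
      by linarith
  qed
  finally show ?thesis .
qed

section \<open>Comparison of the minimiser with a Dirac mass\<close>

lemma parisi_Q_eq:
  "2 * parisi_Q gam h beta x = integral {0..1} (\<lambda>q. parisi_weight gam h beta q * x q)
     + parisi_entropy x (SOME qh. 0 \<le> qh \<and> qh < 1 \<and> x qh = 1)"
  by (simp add: parisi_Q_def parisi_weight_def parisi_entropy_def Let_def)

lemma parisi_Q_ge:
  assumes "x \<in> parisi_M"
  shows "integral {0..1} (\<lambda>q. parisi_weight gam h beta q * x q) \<le> 2 * parisi_Q gam h beta x"
proof -
  have "\<exists>qh. 0 \<le> qh \<and> qh < 1 \<and> x qh = 1"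
    using parisi_M_reaches_one[OF assms] .
  then have "0 \<le> parisi_entropy x (SOME qh. 0 \<le> qh \<and> qh < 1 \<and> x qh = 1)"
    by (rule someI2_ex) (use parisi_entropy_nonneg[OF assms] in blast)
  then show ?thesis
    by (simp add: parisi_Q_eq)
qed

lemma parisi_Q_dirac_cdf_le:
  assumes "0 \<le> r" "r < 1" "(parisi_weight gam h beta has_integral I) {r..1}"
  shows "2 * parisi_Q gam h beta (dirac_cdf r) \<le> I + 1 / (1 - r)"
proof -
  have "((\<lambda>q. parisi_weight gam h beta q * dirac_cdf r q) has_integral 0) {0..r}"
    by (rule has_integral_spike_eq[of "{r}", THEN iffD2, OF _ _ has_integral_0])
       (auto simp: dirac_cdf_def)
  moreover have "((\<lambda>q. parisi_weight gam h beta q * dirac_cdf r q) has_integral I) {r..1}"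
    using assms(3) by (rule has_integral_eq[rotated]) (auto simp: dirac_cdf_def)
  ultimately have "((\<lambda>q. parisi_weight gam h beta q * dirac_cdf r q) has_integral 0 + I) {0..1}"
    by (rule has_integral_combine[rotated 2]) (use assms in auto)
  then have "integral {0..1} (\<lambda>q. parisi_weight gam h beta q * dirac_cdf r q) = I"
    by (simp add: integral_unique)
  moreover have "\<exists>qh. 0 \<le> qh \<and> qh < 1 \<and> dirac_cdf r qh = 1"
    using parisi_M_reaches_one[OF dirac_cdf_in_parisi_M[OF assms(1,2)]] .
  then have "parisi_entropy (dirac_cdf r) (SOME qh. 0 \<le> qh \<and> qh < 1 \<and> dirac_cdf r qh = 1)
               \<le> 1 / (1 - r)"
  proof (rule someI2_ex)
    fix qh assume "0 \<le> qh \<and> qh < 1 \<and> dirac_cdf r qh = 1"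
    then have "r \<le> qh" "qh < 1"
      by (auto simp: dirac_cdf_def split: if_splits)
    then show "parisi_entropy (dirac_cdf r) qh \<le> 1 / (1 - r)"
      using parisi_entropy_dirac_cdf_le assms(1) by blast
  qed
  ultimately show ?thesis
    by (simp add: parisi_Q_eq)
qed

lemma integral_mult_mono_on_ge:
  fixes f g :: "real \<Rightarrow> real"
  assumes "mono_on {a..b} f" "mono_on {a..b} g"
    and "\<And>s. s \<in> {a..b} \<Longrightarrow> 0 \<le> f s" "\<And>s. s \<in> {a..b} \<Longrightarrow> 0 \<le> g s"
    and "q \<in> {a..b}" "(f has_integral I) {q..b}"
  shows "g q * I \<le> integral {a..b} (\<lambda>s. f s * g s)"
proof -
  have "mono_on {a..b} (\<lambda>s. f s * g s)"
  proof (rule mono_onI)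
    fix s t assume "s \<in> {a..b}" "t \<in> {a..b}" "s \<le> t"
    then show "f s * g s \<le> f t * g t"
      using assms(1-4) mono_onD[OF assms(1)] mono_onD[OF assms(2)] by (intro mult_mono) auto
  qed
  then have integrable: "(\<lambda>s. f s * g s) integrable_on {c..d}" if "a \<le> c" "d \<le> b" for c d
    using that by (intro integrable_on_mono_on) (auto intro: mono_on_subset)
  have "g q * I \<le> integral {q..b} (\<lambda>s. f s * g s)"
  proof (rule has_integral_le[OF has_integral_mult_right[OF assms(6)] integrable_integral])
    fix s assume "s \<in> {q..b}"
    then show "g q * f s \<le> f s * g s"
      using mono_onD[OF assms(2), of q s] assms(3,5) by (auto simp: mult.commute intro: mult_left_mono)
  qed (use assms(5) integrable in auto)
  also have "\<dots> \<le> integral {a..q} (\<lambda>s. f s * g s) + integral {q..b} (\<lambda>s. f s * g s)"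
    using assms(3-5) integrable[of a q] by (auto intro!: integral_nonneg)
  also have "\<dots> = integral {a..b} (\<lambda>s. f s * g s)"
    by (rule Henstock_Kurzweil_Integration.integral_combine) (use assms(5) integrable in auto)
  finally show ?thesis .
qed

lemma parisi_minimizer_comparison:
  assumes "summable (\<lambda>p. 2 ^ (p + 2) * (gam (p + 2))\<^sup>2)"
    and "parisi_minimizer gam h beta x" "0 \<le> q" "q < 1" "0 \<le> r" "r < 1"
  shows "x q * (beta\<^sup>2 * (xi gam 1 - xi gam q) + (beta * h)\<^sup>2 * (1 - q))
           \<le> beta\<^sup>2 * (xi gam 1 - xi gam r) + (beta * h)\<^sup>2 * (1 - r) + 1 / (1 - r)"
proof -
  have x: "x \<in> parisi_M"
    using assms(2) by (simp add: parisi_minimizer_def)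
  have "x q * (beta\<^sup>2 * (xi gam 1 - xi gam q) + (beta * h)\<^sup>2 * (1 - q))
          \<le> integral {0..1} (\<lambda>s. parisi_weight gam h beta s * x s)"
    using assms(1,3,4) parisi_M_bounds[OF x]
    by (intro integral_mult_mono_on_ge parisi_weight_mono_on parisi_M_mono_on[OF x]
              parisi_weight_nonneg parisi_weight_has_integral) auto
  also have "\<dots> \<le> 2 * parisi_Q gam h beta x"
    using parisi_Q_ge[OF x] .
  also have "\<dots> \<le> 2 * parisi_Q gam h beta (dirac_cdf r)"
    using assms(2,5,6) dirac_cdf_in_parisi_M by (simp add: parisi_minimizer_def)
  also have "\<dots> \<le> beta\<^sup>2 * (xi gam 1 - xi gam r) + (beta * h)\<^sup>2 * (1 - r) + 1 / (1 - r)"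
    using assms(1,5,6) by (intro parisi_Q_dirac_cdf_le parisi_weight_has_integral) auto
  finally show ?thesis .
qed

text \<open>In the application, Delta r = xi(1) - xi(r), m = x_beta(q), H = beta^2 h^2 and D = xi'(1).\<close>

lemma comparison_bound:
  fixes beta m q D H :: real and \<Delta> :: "real \<Rightarrow> real"
  assumes "0 < beta" "0 \<le> m" "m \<le> 1" "0 \<le> q" "q < 1" "0 \<le> H" "0 \<le> D"
    and lipschitz: "\<And>r. 0 \<le> r \<Longrightarrow> r \<le> 1 \<Longrightarrow> \<Delta> r \<le> D * (1 - r)"
    and comparison: "\<And>r. 0 \<le> r \<Longrightarrow> r < 1 \<Longrightarrow>
           m * (beta\<^sup>2 * \<Delta> q + H * (1 - q)) \<le> beta\<^sup>2 * \<Delta> r + H * (1 - r) + 1 / (1 - r)"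
  shows "beta * m * \<Delta> q \<le> D + 1"
proof (cases "m * beta * (1 - q) < 1")
  case True
  have "beta * m * \<Delta> q \<le> beta * m * (D * (1 - q))"
    using lipschitz[of q] assms by (intro mult_left_mono) auto
  also have "\<dots> = (m * beta * (1 - q)) * D"
    by simp
  also have "\<dots> \<le> D"
    using True \<open>0 \<le> D\<close> mult_right_mono[of "m * beta * (1 - q)" 1 D] by simp
  finally show ?thesis
    by simp
next
  case False
  then have large: "1 \<le> m * beta * (1 - q)"
    by simp
  have "m * (1 - q) \<le> 1"
    using assms by (simp add: mult_le_one)
  then have "m * beta * (1 - q) \<le> beta"
    using mult_right_mono[of "m * (1 - q)" 1 beta] assms by (simp add: algebra_simps)
  then have "1 \<le> beta"
    using large by linarith
  define r where "r = 1 - 1 / beta"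
  have r: "0 \<le> r" "r < 1" "1 - r = 1 / beta"
    using \<open>1 \<le> beta\<close> by (auto simp: r_def)
  have H: "H / beta \<le> m * H * (1 - q)"
    using mult_left_mono[OF large \<open>0 \<le> H\<close>] assms by (simp add: field_simps)
  have "beta\<^sup>2 * \<Delta> r \<le> beta\<^sup>2 * (D * (1 - r))"
    using lipschitz[of r] r by (intro mult_left_mono) auto
  also have "\<dots> = beta * D"
    using r(3) assms(1) by (simp add: power2_eq_square)
  finally have \<Delta>: "beta\<^sup>2 * \<Delta> r \<le> beta * D" .
  have "m * (beta\<^sup>2 * \<Delta> q) + m * H * (1 - q) \<le> beta\<^sup>2 * \<Delta> r + H / beta + beta"
    using comparison[OF r(1,2)] r(3) by (simp add: distrib_left mult.assoc)
  then have "m * beta\<^sup>2 * \<Delta> q \<le> beta * D + beta"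
    using H \<Delta> by (simp add: mult.assoc)
  then have "beta * (beta * m * \<Delta> q) \<le> beta * (D + 1)"
    by (simp add: power2_eq_square algebra_simps)
  then show ?thesis
    using assms(1) by simp
qed

theorem lemma1:
  fixes gam :: "nat \<Rightarrow> real"
  assumes "summable (\<lambda>p. 2 ^ (p + 2) * (gam (p + 2))\<^sup>2)"
    and "\<exists>p. gam (p + 2) \<noteq> 0"
  shows "\<exists>C>0. \<forall>(h::real) (beta::real) x q.
           0 < beta \<longrightarrow> parisi_minimizer gam h beta x \<longrightarrow> q \<in> {0..<1} \<longrightarrow>
           beta * x q \<le> C / (xi gam 1 - xi gam q)"
proof (intro exI[of _ "deriv (xi gam) 1 + 1"] conjI allI impI)
  show "0 < deriv (xi gam) 1 + 1"
    using deriv_xi_nonneg_mono(1)[OF assms(1), of 1 1] by simp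
  fix h beta x q
  assume beta: "0 < (beta::real)" and min: "parisi_minimizer gam h beta x"
    and q: "q \<in> {0..<(1::real)}"
  have "x q \<in> {0..1}"
    using min q parisi_M_bounds by (auto simp: parisi_minimizer_def)
  then have "beta * x q * (xi gam 1 - xi gam q) \<le> deriv (xi gam) 1 + 1"
    using beta q xi_diff_le[OF assms(1)] parisi_minimizer_comparison[OF assms(1) min]
      deriv_xi_nonneg_mono(1)[OF assms(1), of 1 1]
    by (intro comparison_bound[where H = "(beta * h)\<^sup>2"]) auto
  then show "beta * x q \<le> (deriv (xi gam) 1 + 1) / (xi gam 1 - xi gam q)"
    using xi_diff_pos[OF assms] q by (simp add: pos_le_divide_eq)
qed

end
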